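(* Let $A\in\mathbb{R}^{m\times n}$, $b\in\mathbb{R}^m$, let $L\in\mathbb{R}^{s\times n}$ have full column rank, and let $W_1,\dots,W_M\in\mathbb{R}^{m\times\ell}$ satisfy $\sum_{i=1}^M W_iW_i^\top=I_m$. Let $\tau(1),\tau(2),\dots$ be random variables with values in $\{1,\dots,M\}$ such that for each $j\in\mathbb{N}_0$, $(\tau(jM+1),\dots,\tau((j+1)M))$ is a (random) permutation of $\{1,\dots,M\}$ (random cyclic sampling). Write $A_{\tau(k)}=W_{\tau(k)}^\top A$, $b_{\tau(k)}=W_{\tau(k)}^\top b$. (i) Let $\lambda>0$, $y_0=0$, and define $$y_k = y_{k-1} - B_kA_{\tau(k)}^\top(A_{\tau(k)}y_{k-1}-b_{\tau(k)}),\qquad B_k=\Big(\lambda L^\top L+\sum_{i=1}^kA_{\tau(i)}^\top A_{\tau(i)}\Big)^{-1}.$$ Then for every $j\in\mathbb{N}$, $y_{jM}=x(\lambda/j)$. (ii) Let $\Lambda_1,\Lambda_2,\dots$ be real numbers with $\lambda_k=\sum_{i=1}^k\Lambda_i>0$ for all $k$, let $x_0\in\mathbb{R}^n$ be arbitrary, and define $$x_k = x_{k-1}-B_k\big(A_{\tau(k)}^\top(A_{\tau(k)}x_{k-1}-b_{\tau(k)})+\Lambda_kL^\top Lx_{k-1}\big),\qquad B_k=\Big(\sum_{i=1}^k\Lambda_iL^\top L+\sum_{i=1}^kA_{\tau(i)}^\top A_{\tau(i)}\Big)^{-1}.$$ Then for every $j\in\mathbb{N}$, $x_{jM}=x(\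lambda_{jM}/j)$.
   Context: For $\mu>0$, $x(\mu)=(A^\top A+\mu L^\top L)^{-1}A^\top b$ denotes the Tikhonov-regularized solution of $\min_x\|Ax-b\|_2^2+\mu\|Lx\|_2^2$. *)

theory Defs
  imports "HOL-Analysis.Analysis"
begin

definition tikhonov :: "real^'n^'m \<Rightarrow> real^'m \<Rightarrow> real^'n^'s \<Rightarrow> real \<Rightarrow> real^'n" where
  "tikhonov A b L \<mu> =
     matrix_inv (transpose A ** A + \<mu> *\<^sub>R (transpose L ** L)) *v (transpose A *v b)"

text \<open>Random cyclic sampling (pathwise): each block (tau(jM+1),...,tau((j+1)M))
  is a permutation of {1..M}.\<close>
definition cyclic_sampling :: "nat \<Rightarrow> (nat \<Rightarrow> nat) \<Rightarrow> bool" where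
  "cyclic_sampling M \<tau> \<longleftrightarrow>
     (\<forall>j. bij_betw \<tau> {j*M+1..(j+1)*M} {1..M})"

end

theory Submission imports Defs begin

text \<open>
  Write G k = c k L^T L + (sum of A_tau(i)^T A_tau(i) for i \<le> k) for the matrix inverted in step k,
  with c k = lam in part (i) and c k = Lam 1 + ... + Lam k in part (ii). Both iterations read
  z k = z (k-1) - G k^-1 ((G k - G (k-1)) z (k-1) - A_tau(k)^T b_tau(k)), which is equivalent to
  G k z k = G (k-1) z (k-1) + A_tau(k)^T b_tau(k). So every iterate solves the regularized normal
  equations of the blocks seen so far. After j sweeps each block has been seen exactly j times, and
  sum W_i W_i^T = I collapses these equations to (c L^T L + j A^T A) z = j A^T b, whose solution is
  x(c/j). Full column rank of L makes every G k positive definite, hence invertible.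
\<close>

lemma matrix_add_rdistrib: "(B + C) ** A = B ** A + C ** (A::'a::semiring_1^'p^'n)"
  by (vector matrix_matrix_mult_def sum.distrib[symmetric] distrib_right)

lemma matrix_sum_distrib_left: "X ** sum F S = (\<Sum>i\<in>S. (X::'a::semiring_1^'n^'m) ** F i)"
  by (induction S rule: infinite_finite_induct) (auto simp: matrix_add_ldistrib)

lemma matrix_sum_distrib_right: "sum F S ** X = (\<Sum>i\<in>S. F i ** (X::'a::semiring_1^'p^'n))"
  by (induction S rule: infinite_finite_induct) (auto simp: matrix_add_rdistrib)

lemma matrix_vector_sum_distrib_right: "sum F S *v v = (\<Sum>i\<in>S. F i *v (v::'a::semiring_1^'n))"
  by (induction S rule: infinite_finite_induct) (auto simp: matrix_vector_mult_add_rdistrib)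

lemma
  assumes "invertible (G::'a::semiring_1^'n^'m)"
  shows matrix_inv_right: "G ** matrix_inv G = mat 1"
    and matrix_inv_left: "matrix_inv G ** G = mat 1"
  using someI_ex[OF assms[unfolded invertible_def]] unfolding matrix_inv_def by auto

lemma invertible_solve:
  assumes "invertible (G::real^'n^'n)" and "G *v z = r"
  shows "z = matrix_inv G *v r"
  by (metis assms matrix_inv_left matrix_vector_mul_assoc matrix_vector_mul_lid)

lemma gram_quadratic_form: "v \<bullet> ((transpose X ** X) *v v) = (X *v v) \<bullet> (X *v (v::real^'n))"
proof -
  have "v \<bullet> ((transpose X ** X) *v v) = ((X *v v) v* X) \<bullet> v"
    by (simp add: matrix_vector_mul_assoc[symmetric] inner_commute)
  then show ?thesis
    by (simp add: dot_lmul_matrix)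
qed

lemma positive_definite_invertible:
  fixes G :: "real^'n^'n"
  assumes "\<And>v. v \<noteq> 0 \<Longrightarrow> v \<bullet> (G *v v) > 0"
  shows "invertible G"
proof -
  have "inj ((*v) G)"
    using assms by (intro linear_injective_0[THEN iffD2]) (auto, metis inner_zero_right less_irrefl)
  then show ?thesis
    by (simp add: invertible_left_inverse matrix_left_invertible_injective)
qed

lemma regularized_gram_invertible:
  fixes L :: "real^'n^'s" and C :: "'i \<Rightarrow> real^'n^'p"
  assumes "rank L = CARD('n)" and "c > 0"
  shows "invertible (c *\<^sub>R (transpose L ** L) + (\<Sum>i\<in>S. transpose (C i) ** C i))"
proof (rule positive_definite_invertible)
  fix v :: "real^'n"
  assume "v \<noteq> 0"
  with assms(1) have "L *v v \<noteq> 0"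
    by (metis full_rank_injective injD matrix_vector_mult_0_right)
  then have "v \<bullet> ((transpose L ** L) *v v) > 0"
    by (simp add: gram_quadratic_form)
  moreover have "v \<bullet> ((\<Sum>i\<in>S. transpose (C i) ** C i) *v v) \<ge> 0"
    by (simp add: matrix_vector_sum_distrib_right inner_sum_right gram_quadratic_form sum_nonneg)
  ultimately show "v \<bullet> ((c *\<^sub>R (transpose L ** L) + (\<Sum>i\<in>S. transpose (C i) ** C i)) *v v) > 0"
    using \<open>c > 0\<close>
    by (simp del: transpose_matrix_vector
        add: matrix_vector_mult_add_rdistrib inner_add_right scaleR_matrix_vector_assoc[symmetric]
        add_pos_nonneg)
qed

lemma tikhonov_eqI:
  fixes A :: "real^'n^'m" and L :: "real^'n^'s"
  assumes "rank L = CARD('n)" and "c > 0" and "t > 0"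
    and "(c *\<^sub>R (transpose L ** L) + t *\<^sub>R (transpose A ** A)) *v z = t *\<^sub>R (transpose A *v b)"
  shows "z = tikhonov A b L (c / t)"
proof -
  define H where "H = transpose A ** A + (c / t) *\<^sub>R (transpose L ** L)"
  have "invertible H"
    using regularized_gram_invertible[OF assms(1), of "c / t" "\<lambda>_. A" "{()}"] assms(2,3)
    by (simp add: H_def add.commute)
  moreover have "c *\<^sub>R (transpose L ** L) + t *\<^sub>R (transpose A ** A) = t *\<^sub>R H"
    using \<open>t > 0\<close> by (simp add: H_def scaleR_add_right)
  with assms(3,4) have "H *v z = transpose A *v b"
    by (simp del: transpose_matrix_vector add: scaleR_matrix_vector_assoc[symmetric])
  ultimately show ?thesis
    unfolding tikhonov_def H_def by (rule invertible_solve)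
qed

lemma cyclic_sampling_sum:
  fixes f :: "nat \<Rightarrow> 'a::real_vector"
  assumes "cyclic_sampling M \<tau>"
  shows "(\<Sum>i=1..j*M. f (\<tau> i)) = real j *\<^sub>R (\<Sum>t=1..M. f t)"
proof (induction j)
  case (Suc j)
  have "(\<Sum>i=1..j*M + M. f (\<tau> i)) = (\<Sum>i=1..j*M. f (\<tau> i)) + (\<Sum>i=j*M+1..j*M+M. f (\<tau> i))"
    by (rule sum.ub_add_nat) simp
  also have "(\<Sum>i=j*M+1..j*M+M. f (\<tau> i)) = (\<Sum>t=1..M. f t)"
    using assms sum.reindex_bij_betw[of \<tau> "{j*M+1..(j+1)*M}" "{1..M}" f]
    by (simp add: cyclic_sampling_def add.commute)
  finally show ?case
    using Suc by (simp add: add.commute algebra_simps)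
qed simp

lemma
  fixes A :: "real^'n^'m" and W :: "nat \<Rightarrow> real^'l^'m"
  assumes "(\<Sum>i=1..M. W i ** transpose (W i)) = mat 1" and "cyclic_sampling M \<tau>"
  shows sampled_gram_sum:
      "(\<Sum>i=1..j*M. transpose (transpose (W (\<tau> i)) ** A) ** (transpose (W (\<tau> i)) ** A))
        = real j *\<^sub>R (transpose A ** A)"
    and sampled_moment_sum:
      "(\<Sum>i=1..j*M. transpose (transpose (W (\<tau> i)) ** A) *v (transpose (W (\<tau> i)) *v b))
        = real j *\<^sub>R (transpose A *v b)"
proof -
  have "(\<Sum>t=1..M. transpose (transpose (W t) ** A) ** (transpose (W t) ** A))
      = (\<Sum>t=1..M. transpose A ** (W t ** transpose (W t)) ** A)"
    by (simp add: matrix_transpose_mul matrix_mul_assoc)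
  also have "\<dots> = transpose A ** A"
    by (simp only: matrix_sum_distrib_right[symmetric] matrix_sum_distrib_left[symmetric]
        assms(1) matrix_mul_rid)
  finally show "(\<Sum>i=1..j*M. transpose (transpose (W (\<tau> i)) ** A) ** (transpose (W (\<tau> i)) ** A))
        = real j *\<^sub>R (transpose A ** A)"
    using cyclic_sampling_sum[OF assms(2), of "\<lambda>t. transpose (transpose (W t) ** A) ** (transpose (W t) ** A)"]
    by simp
  have "(\<Sum>t=1..M. transpose (transpose (W t) ** A) *v (transpose (W t) *v b))
      = (\<Sum>t=1..M. (transpose A ** (W t ** transpose (W t))) *v b)"
    by (simp only: matrix_transpose_mul transpose_transpose matrix_vector_mul_assoc matrix_mul_assoc)
  also have "\<dots> = transpose A *v b"
    by (simp only: matrix_vector_sum_distrib_right[symmetric] matrix_sum_distrib_left[symmetric]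
        assms(1) matrix_mul_rid)
  finally show "(\<Sum>i=1..j*M. transpose (transpose (W (\<tau> i)) ** A) *v (transpose (W (\<tau> i)) *v b))
        = real j *\<^sub>R (transpose A *v b)"
    using cyclic_sampling_sum[OF assms(2), of "\<lambda>t. transpose (transpose (W t) ** A) *v (transpose (W t) *v b)"]
    by simp
qed

lemma incremental_normal_equation:
  fixes G :: "nat \<Rightarrow> real^'n^'n" and z e :: "nat \<Rightarrow> real^'n"
  assumes "\<forall>k\<ge>1. z k = z (k-1) - matrix_inv (G k) *v ((G k - G (k-1)) *v z (k-1) - e k)"
    and "\<forall>k\<ge>1. invertible (G k)"
    and "G 0 *v z 0 = 0"
  shows "G k *v z k = (\<Sum>i=1..k. e i)"
proof (induction k)
  case (Suc k)
  define u where "u = (G (Suc k) - G k) *v z k - e (Suc k)"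
  have "z (Suc k) = z k - matrix_inv (G (Suc k)) *v u"
    using assms(1) by (simp add: u_def)
  moreover have "G (Suc k) *v (matrix_inv (G (Suc k)) *v u) = u"
    using assms(2) by (simp add: matrix_vector_mul_assoc matrix_inv_right)
  ultimately have "G (Suc k) *v z (Suc k) = G (Suc k) *v z k - u"
    by (simp add: matrix_vector_mult_diff_distrib)
  also have "\<dots> = G k *v z k + e (Suc k)"
    by (simp add: u_def matrix_vector_mult_diff_rdistrib)
  finally show ?case
    using Suc by simp
qed (use assms(3) in simp)

lemma sampled_iteration_tikhonov:
  fixes A :: "real^'n^'m" and b :: "real^'m" and L :: "real^'n^'s"
    and W :: "nat \<Rightarrow> real^'l^'m" and \<tau> :: "nat \<Rightarrow> nat"
    and c d :: "nat \<Rightarrow> real" and z :: "nat \<Rightarrow> real^'n"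
  defines "G \<equiv> \<lambda>k. c k *\<^sub>R (transpose L ** L) +
      (\<Sum>i=1..k. transpose (transpose (W (\<tau> i)) ** A) ** (transpose (W (\<tau> i)) ** A))"
  assumes L_rank: "rank L = CARD('n)"
    and W_sum: "(\<Sum>i=1..M. W i ** transpose (W i)) = mat 1"
    and tau: "cyclic_sampling M \<tau>"
    and c_pos: "\<forall>k\<ge>1. c k > 0"
    and c_incr: "\<forall>k\<ge>1. c k = c (k-1) + d k"
    and step: "\<forall>k\<ge>1. z k = z (k-1) - matrix_inv (G k) *v
        (transpose (transpose (W (\<tau> k)) ** A) *v
            ((transpose (W (\<tau> k)) ** A) *v z (k-1) - transpose (W (\<tau> k)) *v b)
          + d k *\<^sub>R ((transpose L ** L) *v z (k-1)))"
    and start: "c 0 *\<^sub>R ((transpose L ** L) *v z 0) = 0"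
    and "j \<ge> 1"
  shows "z (j*M) = tikhonov A b L (c (j*M) / real j)"
proof -
  define e where "e k = transpose (transpose (W (\<tau> k)) ** A) *v (transpose (W (\<tau> k)) *v b)" for k
  have "M \<noteq> 0"
    using W_sum by (rule contrapos_pn) (simp add: vec_eq_iff mat_def)
  have "G k - G (k-1) = d k *\<^sub>R (transpose L ** L)
      + transpose (transpose (W (\<tau> k)) ** A) ** (transpose (W (\<tau> k)) ** A)" if k: "k \<ge> 1" for k
  proof -
    obtain n where "k = Suc n"
      using k by (cases k) auto
    with c_incr show ?thesis
      by (simp add: G_def scaleR_add_left)
  qed
  then have "(G k - G (k-1)) *v z (k-1) - e k
      = transpose (transpose (W (\<tau> k)) ** A) *v
            ((transpose (W (\<tau> k)) ** A) *v z (k-1) - transpose (W (\<tau> k)) *v b)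
          + d k *\<^sub>R ((transpose L ** L) *v z (k-1))" if "k \<ge> 1" for k
    using that
    by (simp del: transpose_matrix_vector add: e_def matrix_vector_mult_add_rdistrib
        matrix_vector_mult_diff_distrib matrix_vector_mul_assoc scaleR_matrix_vector_assoc)
  then have "\<forall>k\<ge>1. z k = z (k-1) - matrix_inv (G k) *v ((G k - G (k-1)) *v z (k-1) - e k)"
    using step by simp
  moreover have "\<forall>k\<ge>1. invertible (G k)"
    using c_pos by (simp add: G_def regularized_gram_invertible[OF L_rank])
  moreover have "G 0 *v z 0 = 0"
    using start by (simp del: transpose_matrix_vector add: G_def scaleR_matrix_vector_assoc)
  ultimately have "G (j*M) *v z (j*M) = (\<Sum>i=1..j*M. e i)"
    by (rule incremental_normal_equation)
  then have "(c (j*M) *\<^sub>R (transpose L ** L) + real j *\<^sub>R (transpose A ** A)) *v z (j*M)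
      = real j *\<^sub>R (transpose A *v b)"
    by (simp only: G_def e_def sampled_gram_sum[OF W_sum tau] sampled_moment_sum[OF W_sum tau])
  moreover have "c (j*M) > 0"
    using \<open>j \<ge> 1\<close> \<open>M \<noteq> 0\<close> c_pos by simp
  ultimately show ?thesis
    using \<open>j \<ge> 1\<close> by (intro tikhonov_eqI[OF L_rank]) simp_all
qed

lemma sampled_iteration_fixed_regularization:
  fixes A :: "real^'n^'m" and b :: "real^'m" and L :: "real^'n^'s"
    and W :: "nat \<Rightarrow> real^'l^'m" and \<tau> :: "nat \<Rightarrow> nat" and y :: "nat \<Rightarrow> real^'n"
  assumes L_rank: "rank L = CARD('n)"
    and W_sum: "(\<Sum>i=1..M. W i ** transpose (W i)) = mat 1"
    and tau: "cyclic_sampling M \<tau>"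
    and "lam > 0" and "y 0 = 0"
    and "\<forall>k\<ge>1. y k = y (k-1) -
          matrix_inv (lam *\<^sub>R (transpose L ** L) +
             (\<Sum>i=1..k. transpose (transpose (W (\<tau> i)) ** A) ** (transpose (W (\<tau> i)) ** A)))
          *v (transpose (transpose (W (\<tau> k)) ** A) *v
               ((transpose (W (\<tau> k)) ** A) *v y (k-1) - transpose (W (\<tau> k)) *v b))"
    and "j \<ge> 1"
  shows "y (j*M) = tikhonov A b L (lam / real j)"
proof (rule sampled_iteration_tikhonov[OF L_rank W_sum tau, where c="\<lambda>_. lam" and d="\<lambda>_. 0"])
  show "\<forall>k\<ge>1. y k = y (k-1) -
          matrix_inv (lam *\<^sub>R (transpose L ** L) +
             (\<Sum>i=1..k. transpose (transpose (W (\<tau> i)) ** A) ** (transpose (W (\<tau> i)) ** A)))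
          *v (transpose (transpose (W (\<tau> k)) ** A) *v
               ((transpose (W (\<tau> k)) ** A) *v y (k-1) - transpose (W (\<tau> k)) *v b)
             + 0 *\<^sub>R ((transpose L ** L) *v y (k-1)))"
    using assms(6) by (simp only: scaleR_zero_left add_0_right)
qed (use assms(4,5,7) in simp_all)

lemma sampled_iteration_accumulated_regularization:
  fixes A :: "real^'n^'m" and b :: "real^'m" and L :: "real^'n^'s"
    and W :: "nat \<Rightarrow> real^'l^'m" and \<tau> :: "nat \<Rightarrow> nat"
    and Lam :: "nat \<Rightarrow> real" and x :: "nat \<Rightarrow> real^'n"
  assumes L_rank: "rank L = CARD('n)"
    and W_sum: "(\<Sum>i=1..M. W i ** transpose (W i)) = mat 1"
    and tau: "cyclic_sampling M \<tau>"
    and "\<forall>k\<ge>1. (\<Sum>i=1..k. Lam i) > 0"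
    and "\<forall>k\<ge>1. x k = x (k-1) -
          matrix_inv ((\<Sum>i=1..k. Lam i *\<^sub>R (transpose L ** L)) +
             (\<Sum>i=1..k. transpose (transpose (W (\<tau> i)) ** A) ** (transpose (W (\<tau> i)) ** A)))
          *v (transpose (transpose (W (\<tau> k)) ** A) *v
                ((transpose (W (\<tau> k)) ** A) *v x (k-1) - transpose (W (\<tau> k)) *v b)
              + Lam k *\<^sub>R ((transpose L ** L) *v x (k-1)))"
    and "j \<ge> 1"
  shows "x (j*M) = tikhonov A b L ((\<Sum>i=1..j*M. Lam i) / real j)"
proof (rule sampled_iteration_tikhonov[OF L_rank W_sum tau,
      where c="\<lambda>k. \<Sum>i=1..k. Lam i" and d=Lam])
  have "(\<Sum>i=1..k. Lam i) = (\<Sum>i=1..k-1. Lam i) + Lam k" if "k \<ge> 1" for k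
    using that by (cases k) simp_all
  then show "\<forall>k\<ge>1. (\<Sum>i=1..k. Lam i) = (\<Sum>i=1..k-1. Lam i) + Lam k"
    by blast
  show "\<forall>k\<ge>1. x k = x (k-1) -
          matrix_inv ((\<Sum>i=1..k. Lam i) *\<^sub>R (transpose L ** L) +
             (\<Sum>i=1..k. transpose (transpose (W (\<tau> i)) ** A) ** (transpose (W (\<tau> i)) ** A)))
          *v (transpose (transpose (W (\<tau> k)) ** A) *v
                ((transpose (W (\<tau> k)) ** A) *v x (k-1) - transpose (W (\<tau> k)) *v b)
              + Lam k *\<^sub>R ((transpose L ** L) *v x (k-1)))"
    using assms(5) by (simp only: scaleR_sum_left)
qed (use assms(4,6) in simp_all)

theorem theorem2p3:
  fixes A :: "real^'n^'m" and b :: "real^'m" and L :: "real^'n^'s"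
    and W :: "nat \<Rightarrow> real^'l^'m" and M :: nat and \<tau> :: "nat \<Rightarrow> nat"
    and lam :: real and y :: "nat \<Rightarrow> real^'n"
    and Lam :: "nat \<Rightarrow> real" and x :: "nat \<Rightarrow> real^'n"
  assumes L_rank: "rank L = CARD('n)"
    and W_sum: "(\<Sum>i=1..M. W i ** transpose (W i)) = mat 1"
    and tau: "cyclic_sampling M \<tau>"
  shows
    "(lam > 0 \<and> y 0 = 0 \<and>
      (\<forall>k\<ge>1. y k = y (k-1) -
          matrix_inv (lam *\<^sub>R (transpose L ** L) +
             (\<Sum>i=1..k. transpose (transpose (W (\<tau> i)) ** A) ** (transpose (W (\<tau> i)) ** A)))
          *v (transpose (transpose (W (\<tau> k)) ** A) *v
               ((transpose (W (\<tau> k)) ** A) *v y (k-1) - transpose (W (\<tau> k)) *v b)))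
      \<longrightarrow> (\<forall>j\<ge>1. y (j*M) = tikhonov A b L (lam / real j)))
   \<and>
     ((\<forall>k\<ge>1. (\<Sum>i=1..k. Lam i) > 0) \<and>
      (\<forall>k\<ge>1. x k = x (k-1) -
          matrix_inv ((\<Sum>i=1..k. Lam i *\<^sub>R (transpose L ** L)) +
             (\<Sum>i=1..k. transpose (transpose (W (\<tau> i)) ** A) ** (transpose (W (\<tau> i)) ** A)))
          *v (transpose (transpose (W (\<tau> k)) ** A) *v
                ((transpose (W (\<tau> k)) ** A) *v x (k-1) - transpose (W (\<tau> k)) *v b)
              + Lam k *\<^sub>R ((transpose L ** L) *v x (k-1))))
      \<longrightarrow> (\<forall>j\<ge>1. x (j*M) = tikhonov A b L ((\<Sum>i=1..j*M. Lam i) / real j)))"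
  using sampled_iteration_fixed_regularization[OF L_rank W_sum tau]
    sampled_iteration_accumulated_regularization[OF L_rank W_sum tau]
  by blast

end
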